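(* Let $N=2n\ge2$ and $L\ge1$. For every $c=c_L\otimes\cdots\otimes c_1\in B^{1\otimes L}$, $$\overline D_{B^{1\otimes L}}(c)=\overline D_{B^{1\vee\otimes L}}(c^{\vee*}),\qquad\text{where } c^{\vee*}=c_L^{\vee*}\otimes\cdots\otimes c_1^{\vee*}\ \text{ and } j^{\vee*}=(N+1-j)^\vee.$$
   Context: $B^1$ is the $U_q'(A^{(1)}_{N-1})$-crystal with elements $1,\dots,N$, $f_i(i)=i+1$ ($1\le i\le N-1$), $f_0(N)=1$, all other $f_i$ zero. $B^{1\vee}$ is its dual: elements $j^\vee$, $f_i(b^\vee)=e_i(b)^\vee$ (so $f_i((i+1)^\vee)=i^\vee$, $f_0(1^\vee)=N^\vee$). Tensor products: $f_i(b_2\otimes b_1)=f_i(b_2)\otimes b_1$ if $\varepsilon_i(b_2)\ge\varphi_i(b_1)$, else $b_2\otimes f_i(b_1)$; $e_i(b_2\otimes b_1)=e_i(b_2)\otimes b_1$ if $\varepsilon_i(b_2)>\varphi_i(b_1)$, else $b_2\otimes e_i(b_1)$. For $B_0\in\{B^1,B^{1\vee}\}$ with leading element $u=1$ (resp. $u=N^\vee$), the local coenergy $H:B_0\otimes B_0\to\mathbb Z_{\ge0}$ is the unique function constant on classical components (components after deleting $0$-arrows) with $H(u\otimes u)=0$ and, whenever $e_0(x\otimes y)\ne0$, $H(e_0(x\otimes y))=H(x\otimes y)+1$ if $e_0(x\otimes y)=e_0(x)\otimes y$ and $H(x\otimes y)-1$ otherwise. The intrinsic coenergy on $B_0^{\otimes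 L}$ is $\overline D_{B_0^{\otimes L}}(b_L\otimes\cdots\otimes b_1)=\sum_{i=1}^{L-1}(L-i)\,H(b_{i+1}\otimes b_i)$. *)

theory Defs
  imports Main
begin

text \<open>For B^1 the number j is the element j; for the dual B^{1 dual} the number j
encodes the element j^dual.\<close>

definition B1_f :: "nat \<Rightarrow> nat \<Rightarrow> nat \<Rightarrow> nat option" where
  "B1_f N i b = (if 1 \<le> i \<and> i \<le> N - 1 \<and> b = i then Some (i + 1)
                 else if i = 0 \<and> b = N then Some 1 else None)"

definition B1_e :: "nat \<Rightarrow> nat \<Rightarrow> nat \<Rightarrow> nat option" where
  "B1_e N i b = (if 1 \<le> i \<and> i \<le> N - 1 \<and> b = i + 1 then Some i
                 else if i = 0 \<and> b = 1 then Some N else None)"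

text \<open>Dual crystal: f_i(b^dual) = e_i(b)^dual and e_i(b^dual) = f_i(b)^dual.\<close>
definition B1v_f :: "nat \<Rightarrow> nat \<Rightarrow> nat \<Rightarrow> nat option" where
  "B1v_f N = B1_e N"

definition B1v_e :: "nat \<Rightarrow> nat \<Rightarrow> nat \<Rightarrow> nat option" where
  "B1v_e N = B1_f N"

fun opt_iter :: "('a \<Rightarrow> 'a option) \<Rightarrow> nat \<Rightarrow> 'a \<Rightarrow> 'a option" where
  "opt_iter g 0 b = Some b"
| "opt_iter g (Suc k) b = Option.bind (opt_iter g k b) g"

definition strlen :: "('a \<Rightarrow> 'a option) \<Rightarrow> 'a \<Rightarrow> nat" where
  "strlen g b = (GREATEST k. opt_iter g k b \<noteq> None)"

text \<open>Tensor product of two crystals on pairs (b2, b1) = b2 \<otimes> b1.\<close>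
definition tens_f :: "(nat \<Rightarrow> 'a \<Rightarrow> 'a option) \<Rightarrow> (nat \<Rightarrow> 'a \<Rightarrow> 'a option)
     \<Rightarrow> nat \<Rightarrow> 'a \<times> 'a \<Rightarrow> ('a \<times> 'a) option" where
  "tens_f e f i p = (case p of (b2, b1) \<Rightarrow>
     if strlen (e i) b2 \<ge> strlen (f i) b1 then map_option (\<lambda>x. (x, b1)) (f i b2)
     else map_option (\<lambda>y. (b2, y)) (f i b1))"

definition tens_e :: "(nat \<Rightarrow> 'a \<Rightarrow> 'a option) \<Rightarrow> (nat \<Rightarrow> 'a \<Rightarrow> 'a option)
     \<Rightarrow> nat \<Rightarrow> 'a \<times> 'a \<Rightarrow> ('a \<times> 'a) option" where
  "tens_e e f i p = (case p of (b2, b1) \<Rightarrow>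
     if strlen (e i) b2 > strlen (f i) b1 then map_option (\<lambda>x. (x, b1)) (e i b2)
     else map_option (\<lambda>y. (b2, y)) (e i b1))"

text \<open>Defining properties of the local coenergy on B_0 \<otimes> B_0 (elements 1..N),
with leading element u.  H is required to vanish outside B_0 \<otimes> B_0 to make
it a unique total function.\<close>
definition is_local_coenergy ::
  "(nat \<Rightarrow> nat \<Rightarrow> nat \<Rightarrow> nat option) \<Rightarrow> (nat \<Rightarrow> nat \<Rightarrow> nat \<Rightarrow> nat option)
   \<Rightarrow> nat \<Rightarrow> nat \<Rightarrow> (nat \<times> nat \<Rightarrow> int) \<Rightarrow> bool" where
  "is_local_coenergy e f N u H \<longleftrightarrow>
     (\<forall>p. p \<notin> {1..N} \<times> {1..N} \<longrightarrow> H p = 0) \<and>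
     (\<forall>p \<in> {1..N} \<times> {1..N}. H p \<ge> 0) \<and>
     (\<forall>p \<in> {1..N} \<times> {1..N}. \<forall>i \<in> {1..N - 1}. \<forall>q.
         tens_f (e N) (f N) i p = Some q \<longrightarrow> H q = H p) \<and>
     H (u, u) = 0 \<and>
     (\<forall>x \<in> {1..N}. \<forall>y \<in> {1..N}. \<forall>q.
         tens_e (e N) (f N) 0 (x, y) = Some q \<longrightarrow>
           H q = (if e N 0 x = Some (fst q) \<and> snd q = y then H (x, y) + 1 else H (x, y) - 1))"

definition local_coenergy ::
  "(nat \<Rightarrow> nat \<Rightarrow> nat \<Rightarrow> nat option) \<Rightarrow> (nat \<Rightarrow> nat \<Rightarrow> nat \<Rightarrow> nat option)
   \<Rightarrow> nat \<Rightarrow> nat \<Rightarrow> nat \<times> nat \<Rightarrow> int" where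
  "local_coenergy e f N u = (THE H. is_local_coenergy e f N u H)"

definition H_B1 :: "nat \<Rightarrow> nat \<times> nat \<Rightarrow> int" where
  "H_B1 N = local_coenergy B1_e B1_f N 1"

definition H_B1v :: "nat \<Rightarrow> nat \<times> nat \<Rightarrow> int" where
  "H_B1v N = local_coenergy B1v_e B1v_f N N"

text \<open>Intrinsic coenergy of b_L \<otimes> ... \<otimes> b_1, given as b :: nat \<Rightarrow> _ with b i = b_i.\<close>
definition intrinsic_coenergy :: "(nat \<times> nat \<Rightarrow> int) \<Rightarrow> nat \<Rightarrow> (nat \<Rightarrow> nat) \<Rightarrow> int" where
  "intrinsic_coenergy H L b = (\<Sum>i = 1..L - 1. int (L - i) * H (b (i + 1), b i))"

end

theory Submission
  imports Defs
begin

text \<open>Both local coenergies are explicit: on B^1 \<otimes> B^1 the classical components are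
  {x \<le> y} and {x > y}, so H is the indicator of a descent x > y, the value 1 being forced
  by the 0-arrow from 1 \<otimes> 1 to N \<otimes> 1.  Dually, on B^{1 dual} \<otimes> B^{1 dual} H is the
  indicator of an ascent x < y.  The reflection j \<mapsto> N + 1 - j turns descents into ascents,
  so the two intrinsic coenergies agree term by term.\<close>

lemma opt_iter_Suc_None: "g b = None \<Longrightarrow> opt_iter g (Suc j) b = None"
  by (induction j) auto

lemma strlen_eq_0:
  assumes "g b = None"
  shows "strlen g b = 0"
  unfolding strlen_def
proof (rule Greatest_equality)
  fix k assume "opt_iter g k b \<noteq> None"
  then show "k \<le> 0"
    using opt_iter_Suc_None[of g b] assms by (cases k) auto
qed simp

lemma strlen_eq_1:
  assumes "g b = Some b'" and "g b' = None"
  shows "strlen g b = 1"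
  unfolding strlen_def
proof (rule Greatest_equality)
  have "opt_iter g (Suc (Suc j)) b = None" for j
    using assms by (induction j) auto
  moreover fix k assume "opt_iter g k b \<noteq> None"
  ultimately show "k \<le> 1"
    by (cases k; cases "k - 1") auto
qed (use assms in simp)

lemma strlen_B1_e:
  assumes "N \<ge> 2"
  shows "strlen (B1_e N i) b =
    of_bool ((1 \<le> i \<and> i \<le> N - 1 \<and> b = i + 1) \<or> (i = 0 \<and> b = 1))"
proof (cases "B1_e N i b")
  case None
  then show ?thesis
    using strlen_eq_0[of "B1_e N i" b] by (simp add: B1_e_def split: if_splits)
next
  case (Some b')
  moreover have "B1_e N i b' = None"
    using Some assms by (auto simp: B1_e_def split: if_splits)
  ultimately show ?thesis
    using strlen_eq_1[of "B1_e N i" b b'] by (simp add: B1_e_def split: if_splits)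
qed

lemma strlen_B1_f:
  assumes "N \<ge> 2"
  shows "strlen (B1_f N i) b =
    of_bool ((1 \<le> i \<and> i \<le> N - 1 \<and> b = i) \<or> (i = 0 \<and> b = N))"
proof (cases "B1_f N i b")
  case None
  then show ?thesis
    using strlen_eq_0[of "B1_f N i" b] by (simp add: B1_f_def split: if_splits)
next
  case (Some b')
  moreover have "B1_f N i b' = None"
    using Some assms by (auto simp: B1_f_def split: if_splits)
  ultimately show ?thesis
    using strlen_eq_1[of "B1_f N i" b b'] by (simp add: B1_f_def split: if_splits)
qed

lemma tens_f_B1:
  assumes "N \<ge> 2" and "1 \<le> i" and "i \<le> N - 1"
  shows "tens_f (B1_e N) (B1_f N) i (x, y) =
    (if x = i + 1 then None else if y = i then Some (x, i + 1)
     else if x = i then Some (i + 1, y) else None)"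
  using assms by (simp add: tens_f_def strlen_B1_e strlen_B1_f B1_f_def)

lemma tens_e_B1_0:
  assumes "N \<ge> 2"
  shows "tens_e (B1_e N) (B1_f N) 0 (x, y) =
    (if x = 1 \<and> y \<noteq> N then Some (N, y) else if y = 1 then Some (x, N) else None)"
  using assms by (simp add: tens_e_def strlen_B1_e strlen_B1_f B1_e_def)

lemma tens_f_B1v:
  assumes "N \<ge> 2" and "1 \<le> i" and "i \<le> N - 1"
  shows "tens_f (B1v_e N) (B1v_f N) i (x, y) =
    (if x \<noteq> i \<and> y = i + 1 then Some (x, i) else if x = i + 1 then Some (i, y) else None)"
  using assms by (simp add: B1v_e_def B1v_f_def tens_f_def strlen_B1_e strlen_B1_f B1_e_def)

lemma tens_e_B1v_0:
  assumes "N \<ge> 2"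
  shows "tens_e (B1v_e N) (B1v_f N) 0 (x, y) =
    (if x = N \<and> y \<noteq> 1 then Some (1, y) else if y = N then Some (x, 1) else None)"
  using assms by (simp add: B1v_e_def B1v_f_def tens_e_def strlen_B1_e strlen_B1_f B1_f_def)

lemma is_local_coenergy_classical_invariant:
  assumes "is_local_coenergy e f N u H"
    and "x \<in> {1..N}" and "y \<in> {1..N}" and "i \<in> {1..N - 1}"
    and "tens_f (e N) (f N) i (x, y) = Some q"
  shows "H q = H (x, y)"
  using assms unfolding is_local_coenergy_def by blast

lemma is_local_coenergy_e0:
  assumes "is_local_coenergy e f N u H"
    and "x \<in> {1..N}" and "y \<in> {1..N}"
    and "tens_e (e N) (f N) 0 (x, y) = Some q"
  shows "H q = (if e N 0 x = Some (fst q) \<and> snd q = y then H (x, y) + 1 else H (x, y) - 1)"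
  using assms unfolding is_local_coenergy_def by blast

lemma eq_along_nat_interval:
  fixes g :: "nat \<Rightarrow> 'a"
  assumes "a \<le> b" and "\<And>k. a \<le> k \<Longrightarrow> k < b \<Longrightarrow> g (Suc k) = g k"
  shows "g b = g a"
  using assms by (induction b rule: dec_induct) auto

definition descent_coenergy :: "nat \<Rightarrow> nat \<times> nat \<Rightarrow> int" where
  "descent_coenergy N = (\<lambda>(x, y). of_bool (x \<in> {1..N} \<and> y \<in> {1..N} \<and> y < x))"

definition ascent_coenergy :: "nat \<Rightarrow> nat \<times> nat \<Rightarrow> int" where
  "ascent_coenergy N = (\<lambda>(x, y). of_bool (x \<in> {1..N} \<and> y \<in> {1..N} \<and> x < y))"

lemma is_local_coenergy_B1_descent:
  assumes "N \<ge> 2"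
  shows "is_local_coenergy B1_e B1_f N 1 (descent_coenergy N)"
  using assms
  by (auto simp: is_local_coenergy_def descent_coenergy_def tens_f_B1 tens_e_B1_0 B1_e_def
      split: if_splits)

lemma is_local_coenergy_B1v_ascent:
  assumes "N \<ge> 2"
  shows "is_local_coenergy B1v_e B1v_f N N (ascent_coenergy N)"
proof -
  have "B1v_e N 0 x = Some z \<longleftrightarrow> x = N \<and> z = 1" for x z
    by (auto simp: B1v_e_def B1_f_def)
  then show ?thesis
    using assms
    by (auto simp: is_local_coenergy_def ascent_coenergy_def tens_f_B1v tens_e_B1v_0
        split: if_splits)
qed

lemma B1_coenergy_step_snd:
  assumes "is_local_coenergy B1_e B1_f N 1 H" and "N \<ge> 2"
    and "x \<in> {1..N}" and "1 \<le> k" and "k < N" and "x \<noteq> Suc k"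
  shows "H (x, Suc k) = H (x, k)"
  using is_local_coenergy_classical_invariant[OF assms(1), of x k k] assms
  by (simp add: tens_f_B1)

lemma B1_coenergy_step_fst:
  assumes "is_local_coenergy B1_e B1_f N 1 H" and "N \<ge> 2"
    and "y \<in> {1..N}" and "1 \<le> k" and "k < N" and "y \<noteq> k"
  shows "H (Suc k, y) = H (k, y)"
  using is_local_coenergy_classical_invariant[OF assms(1), of k y k] assms
  by (simp add: tens_f_B1)

lemma B1_coenergy_weak_ascent:
  assumes H: "is_local_coenergy B1_e B1_f N 1 H" and "N \<ge> 2"
    and "1 \<le> x" and "x \<le> y" and "y \<le> N"
  shows "H (x, y) = 0"
proof -
  have "H (x, x) = H (1, 1)"
  proof (rule eq_along_nat_interval)
    fix k assume "1 \<le> k" "k < x"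
    then show "H (Suc k, Suc k) = H (k, k)"
      using B1_coenergy_step_fst[OF H, of "Suc k" k] B1_coenergy_step_snd[OF H, of k k] assms
      by simp
  qed (use assms in simp)
  moreover have "H (x, y) = H (x, x)"
    by (rule eq_along_nat_interval) (use assms B1_coenergy_step_snd[OF H] in auto)
  moreover have "H (1, 1) = 0"
    using H by (simp add: is_local_coenergy_def)
  ultimately show ?thesis
    by simp
qed

lemma B1_coenergy_descent:
  assumes H: "is_local_coenergy B1_e B1_f N 1 H" and "N \<ge> 2"
    and "1 \<le> y" and "y < x" and "x \<le> N"
  shows "H (x, y) = 1"
proof -
  have "H (x, y) = H (x, 1)"
    by (rule eq_along_nat_interval) (use assms B1_coenergy_step_snd[OF H] in auto)
  also have "\<dots> = H (N, 1)"
    by (rule eq_along_nat_interval[symmetric]) (use assms B1_coenergy_step_fst[OF H] in auto)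
  also have "\<dots> = H (1, 1) + 1"
    using is_local_coenergy_e0[OF H, of 1 1 "(N, 1)"] assms by (simp add: tens_e_B1_0 B1_e_def)
  finally show ?thesis
    using H by (simp add: is_local_coenergy_def)
qed

lemma H_B1_eq_descent_coenergy:
  assumes "N \<ge> 2"
  shows "H_B1 N = descent_coenergy N"
  unfolding H_B1_def local_coenergy_def
proof (rule the_equality)
  fix H assume H: "is_local_coenergy B1_e B1_f N 1 H"
  show "H = descent_coenergy N"
  proof (intro ext, clarify)
    fix x y
    consider "(x, y) \<notin> {1..N} \<times> {1..N}" | "1 \<le> x" "x \<le> y" "y \<le> N" | "1 \<le> y" "y < x" "x \<le> N"
      by fastforce
    then show "H (x, y) = descent_coenergy N (x, y)"
    proof cases
      case 1
      then show ?thesis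
        using H by (auto simp: is_local_coenergy_def descent_coenergy_def)
    qed (use B1_coenergy_weak_ascent[OF H] B1_coenergy_descent[OF H] assms
        in \<open>auto simp: descent_coenergy_def\<close>)
  qed
qed (fact is_local_coenergy_B1_descent[OF assms])

lemma B1v_coenergy_step_snd:
  assumes "is_local_coenergy B1v_e B1v_f N N H" and "N \<ge> 2"
    and "x \<in> {1..N}" and "1 \<le> k" and "k < N" and "x \<noteq> k"
  shows "H (x, Suc k) = H (x, k)"
  using is_local_coenergy_classical_invariant[OF assms(1), of x "Suc k" k] assms
  by (simp add: tens_f_B1v)

lemma B1v_coenergy_step_fst:
  assumes "is_local_coenergy B1v_e B1v_f N N H" and "N \<ge> 2"
    and "y \<in> {1..N}" and "1 \<le> k" and "k < N" and "y \<noteq> Suc k"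
  shows "H (Suc k, y) = H (k, y)"
  using is_local_coenergy_classical_invariant[OF assms(1), of "Suc k" y k] assms
  by (simp add: tens_f_B1v)

lemma B1v_coenergy_weak_descent:
  assumes H: "is_local_coenergy B1v_e B1v_f N N H" and "N \<ge> 2"
    and "1 \<le> y" and "y \<le> x" and "x \<le> N"
  shows "H (x, y) = 0"
proof -
  have "H (x, y) = H (x, x)"
    by (rule eq_along_nat_interval[symmetric]) (use assms B1v_coenergy_step_snd[OF H] in auto)
  also have "\<dots> = H (N, N)"
  proof (rule eq_along_nat_interval[symmetric])
    fix k assume "x \<le> k" "k < N"
    then show "H (Suc k, Suc k) = H (k, k)"
      using B1v_coenergy_step_snd[OF H, of "Suc k" k] B1v_coenergy_step_fst[OF H, of k k] assms
      by simp
  qed (use assms in simp)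
  finally show ?thesis
    using H by (simp add: is_local_coenergy_def)
qed

lemma B1v_coenergy_ascent:
  assumes H: "is_local_coenergy B1v_e B1v_f N N H" and "N \<ge> 2"
    and "1 \<le> x" and "x < y" and "y \<le> N"
  shows "H (x, y) = 1"
proof -
  have "H (x, y) = H (1, y)"
    by (rule eq_along_nat_interval) (use assms B1v_coenergy_step_fst[OF H] in auto)
  also have "\<dots> = H (1, N)"
    by (rule eq_along_nat_interval[symmetric]) (use assms B1v_coenergy_step_snd[OF H] in auto)
  also have "\<dots> = H (N, N) + 1"
    using is_local_coenergy_e0[OF H, of N N "(1, N)"] tens_e_B1v_0[of N N N] assms
    by (simp add: B1v_e_def B1_f_def)
  finally show ?thesis
    using H by (simp add: is_local_coenergy_def)
qed

lemma H_B1v_eq_ascent_coenergy: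
  assumes "N \<ge> 2"
  shows "H_B1v N = ascent_coenergy N"
  unfolding H_B1v_def local_coenergy_def
proof (rule the_equality)
  fix H assume H: "is_local_coenergy B1v_e B1v_f N N H"
  show "H = ascent_coenergy N"
  proof (intro ext, clarify)
    fix x y
    consider "(x, y) \<notin> {1..N} \<times> {1..N}" | "1 \<le> y" "y \<le> x" "x \<le> N" | "1 \<le> x" "x < y" "y \<le> N"
      by fastforce
    then show "H (x, y) = ascent_coenergy N (x, y)"
    proof cases
      case 1
      then show ?thesis
        using H by (auto simp: is_local_coenergy_def ascent_coenergy_def)
    qed (use B1v_coenergy_weak_descent[OF H] B1v_coenergy_ascent[OF H] assms
        in \<open>auto simp: ascent_coenergy_def\<close>)
  qed
qed (fact is_local_coenergy_B1v_ascent[OF assms])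

lemma H_B1v_reflect:
  assumes "N \<ge> 2" and "x \<in> {1..N}" and "y \<in> {1..N}"
  shows "H_B1v N (N + 1 - x, N + 1 - y) = H_B1 N (x, y)"
  using assms
  by (auto simp: H_B1_eq_descent_coenergy H_B1v_eq_ascent_coenergy
      descent_coenergy_def ascent_coenergy_def)

lemma intrinsic_coenergy_cong:
  assumes "\<And>i. 1 \<le> i \<Longrightarrow> i < L \<Longrightarrow> H (b (i + 1), b i) = H' (b' (i + 1), b' i)"
  shows "intrinsic_coenergy H L b = intrinsic_coenergy H' L b'"
  unfolding intrinsic_coenergy_def
  by (rule sum.cong) (use assms in auto)

lemma intrinsic_coenergy_B1_eq_B1v_reflect:
  assumes "N \<ge> 2" and "\<forall>i \<in> {1..L}. c i \<in> {1..N}"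
  shows "intrinsic_coenergy (H_B1 N) L c = intrinsic_coenergy (H_B1v N) L (\<lambda>i. N + 1 - c i)"
  by (rule intrinsic_coenergy_cong) (use assms H_B1v_reflect in simp)

theorem proposition42:
  fixes n L :: nat and c :: "nat \<Rightarrow> nat"
  assumes "n \<ge> 1" and "L \<ge> 1"
    and "\<forall>i \<in> {1..L}. c i \<in> {1..2 * n}"
  shows "intrinsic_coenergy (H_B1 (2 * n)) L c
         = intrinsic_coenergy (H_B1v (2 * n)) L (\<lambda>i. 2 * n + 1 - c i)"
  using intrinsic_coenergy_B1_eq_B1v_reflect[of "2 * n" L c] assms by simp

end
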